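(* Let $T$ be a type distribution on $\mathcal{S}\subseteq\mathbb{N}$, let $\mathcal{Q}_n$ be a monotone event, and let $\Lambda_n,\Lambda_n':\mathcal{S}\times\mathcal{S}\to\mathbb{N}$ satisfy $\Lambda_n(t,s)\le\Lambda_n'(t,s)$ for all $t,s\in\mathcal{S}$. Then: 1. if $\mathcal{Q}_n$ is increasing, $\mathbb{P}(\texttt{ARD}_n(T,\Lambda_n)\in\mathcal{Q}_n)\le\mathbb{P}(\texttt{ARD}_n(T,\Lambda_n')\in\mathcal{Q}_n)$; 2. if $\mathcal{Q}_n$ is decreasing, $\mathbb{P}(\texttt{ARD}_n(T,\Lambda_n)\in\mathcal{Q}_n)\ge\mathbb{P}(\texttt{ARD}_n(T,\Lambda_n')\in\mathcal{Q}_n)$.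
   Context: $\texttt{ARD}_n(T,\Lambda_n)$: vertex set $[n]$, types $T_v$ i.i.d. as $T$; with $V_t=\{v:T_v=t\}$, independently for each $(t,s)\in\mathcal{S}^2$ choose $\Lambda_n(t,s)$ arcs uniformly at random without replacement from $(V_t\times V_s)\setminus\{(v,v):v\in[n]\}$ (all of them if there are fewer). For marked digraphs, $G_1\subseteq G_2$ if vertices carry the same marks and arcs of $G_1$ are arcs of $G_2$; $\mathcal{Q}_n$ is increasing if $G_1\in\mathcal{Q}_n,G_1\subseteq G_2\Rightarrow G_2\in\mathcal{Q}_n$, decreasing if $G_2\in\mathcal{Q}_n,G_1\subseteq G_2\Rightarrow G_1\in\mathcal{Q}_n$, monotone if either. *)

theory Defs
  imports "HOL-Probability.Probability"
begin

text \<open>A marked digraph: a pair (marks, arcs), marks :: vertex => type, arcs a set of pairs.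
  Vertex set [n] is represented as {0..<n}.\<close>
type_synonym mdigraph = "(nat \<Rightarrow> nat) \<times> (nat \<times> nat) set"

definition on_vertices :: "nat \<Rightarrow> mdigraph \<Rightarrow> bool" where
  "on_vertices n G \<longleftrightarrow> snd G \<subseteq> {(u,v). u < n \<and> v < n \<and> u \<noteq> v}"

definition msubgraph :: "mdigraph \<Rightarrow> mdigraph \<Rightarrow> bool" where
  "msubgraph G1 G2 \<longleftrightarrow> fst G1 = fst G2 \<and> snd G1 \<subseteq> snd G2"

definition increasing_event :: "nat \<Rightarrow> mdigraph set \<Rightarrow> bool" where
  "increasing_event n Q \<longleftrightarrow> (\<forall>G1 G2. on_vertices n G1 \<and> on_vertices n G2 \<and>
      msubgraph G1 G2 \<and> G1 \<in> Q \<longrightarrow> G2 \<in> Q)"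

definition decreasing_event :: "nat \<Rightarrow> mdigraph set \<Rightarrow> bool" where
  "decreasing_event n Q \<longleftrightarrow> (\<forall>G1 G2. on_vertices n G1 \<and> on_vertices n G2 \<and>
      msubgraph G1 G2 \<and> G2 \<in> Q \<longrightarrow> G1 \<in> Q)"

definition cand_arcs :: "nat \<Rightarrow> (nat \<Rightarrow> nat) \<Rightarrow> nat \<Rightarrow> nat \<Rightarrow> (nat \<times> nat) set" where
  "cand_arcs n tp t s = {(u,v). u < n \<and> v < n \<and> u \<noteq> v \<and> tp u = t \<and> tp v = s}"

definition choose_arcs :: "nat \<Rightarrow> (nat \<times> nat) set \<Rightarrow> (nat \<times> nat) set pmf" where
  "choose_arcs k C = pmf_of_set {A. A \<subseteq> C \<and> card A = min k (card C)}"

text \<open>ARD_n(T, Lambda): types i.i.d. T on {0..<n} (marks 0 outside, irrelevant);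
  then independently for each pair of types occurring, choose arcs.\<close>
definition ARD :: "nat \<Rightarrow> nat pmf \<Rightarrow> (nat \<Rightarrow> nat \<Rightarrow> nat) \<Rightarrow> mdigraph pmf" where
  "ARD n T \<Lambda> =
     do { tp \<leftarrow> Pi_pmf {0..<n} 0 (\<lambda>_. T);
          let P = (tp ` {0..<n}) \<times> (tp ` {0..<n});
          ch \<leftarrow> Pi_pmf P {} (\<lambda>(t,s). choose_arcs (\<Lambda> t s) (cand_arcs n tp t s));
          return_pmf (tp, \<Union>p\<in>P. ch p) }"

end

theory Submission
  imports Defs
begin

text \<open>
  The proof is a coupling. If \<open>m \<le> m'\<close>, the uniform distribution on the pairs
  \<open>A \<subseteq> B \<subseteq> C\<close> with \<open>|A| = m\<close> and \<open>|B| = m'\<close> has uniform marginals, because every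
  \<open>m\<close>-subset of \<open>C\<close> lies in the same number of \<open>m'\<close>-subsets and every \<open>m'\<close>-subset
  contains the same number of \<open>m\<close>-subsets; so a uniform \<open>m\<close>-subset can be sampled
  inside a uniform \<open>m'\<close>-subset. Using the same types for both graphs and coupling the
  independent arc choices for each pair of types in this way, \<open>ARD\<^sub>n(T,\<Lambda>)\<close> becomes a
  subgraph of \<open>ARD\<^sub>n(T,\<Lambda>')\<close> almost surely, and monotone events compare accordingly.
\<close>

lemma map_pmf_of_set_equal_fibres:
  assumes "finite P" "X \<noteq> {}" "f ` P \<subseteq> X"
    and fibres: "\<And>x. x \<in> X \<Longrightarrow> card {p \<in> P. f p = x} = k" and "k > 0"
  shows "map_pmf f (pmf_of_set P) = pmf_of_set X"
proof -
  let ?fibre = "\<lambda>x. {p \<in> P. f p = x}"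
  have fibre_ne: "?fibre x \<noteq> {}" if "x \<in> X" for x
    using fibres[OF that] \<open>k > 0\<close> by (metis card.empty less_irrefl)
  have "X = f ` P"
    using fibre_ne \<open>f ` P \<subseteq> X\<close> by blast
  then have "finite X"
    using \<open>finite P\<close> by simp
  have "P = (\<Union>x\<in>X. ?fibre x)"
    using \<open>f ` P \<subseteq> X\<close> by blast
  moreover have "pmf_of_set (\<Union>x\<in>X. ?fibre x) = pmf_of_set X \<bind> (\<lambda>x. pmf_of_set (?fibre x))"
  proof (rule pmf_of_set_UN)
    show "finite (\<Union>x\<in>X. ?fibre x)"
      using \<open>finite X\<close> \<open>finite P\<close> by (intro finite_UN_I) auto
    show "disjoint_family_on ?fibre X" by (auto simp: disjoint_family_on_def)
  qed (use assms fibre_ne in auto)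
  ultimately have "pmf_of_set P = pmf_of_set X \<bind> (\<lambda>x. pmf_of_set (?fibre x))"
    by simp
  also have "map_pmf f \<dots> = pmf_of_set X \<bind> return_pmf"
  proof (unfold map_bind_pmf, rule bind_pmf_cong)
    fix x assume "x \<in> set_pmf (pmf_of_set X)"
    then have x: "x \<in> X"
      using \<open>finite X\<close> \<open>X \<noteq> {}\<close> by simp
    have "map_pmf f (pmf_of_set (?fibre x)) = map_pmf (\<lambda>_. x) (pmf_of_set (?fibre x))"
      by (rule map_pmf_cong) (use fibre_ne[OF x] \<open>finite P\<close> in auto)
    then show "map_pmf f (pmf_of_set (?fibre x)) = return_pmf x" by simp
  qed simp
  finally show ?thesis by (simp add: bind_return_pmf')
qed

lemma rel_pmf_of_set_biregular:
  assumes "finite X" "finite Y" "X \<noteq> {}" "Y \<noteq> {}"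
    and fwd: "\<And>x. x \<in> X \<Longrightarrow> card {y \<in> Y. R x y} = k" and "k > 0"
    and bwd: "\<And>y. y \<in> Y \<Longrightarrow> card {x \<in> X. R x y} = l" and "l > 0"
  shows "rel_pmf R (pmf_of_set X) (pmf_of_set Y)"
proof
  let ?P = "Sigma X (\<lambda>x. {y \<in> Y. R x y})"
  have "finite ?P" using assms by auto
  have fst_fibre: "card {p \<in> ?P. fst p = x} = k" if "x \<in> X" for x
  proof -
    have "{p \<in> ?P. fst p = x} = Pair x ` {y \<in> Y. R x y}" using that by auto
    then show ?thesis using fwd[OF that] by (simp add: card_image inj_on_def)
  qed
  have snd_fibre: "card {p \<in> ?P. snd p = y} = l" if "y \<in> Y" for y
  proof -
    have "{p \<in> ?P. snd p = y} = (\<lambda>x. (x, y)) ` {x \<in> X. R x y}" using that by auto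
    then show ?thesis using bwd[OF that] by (simp add: card_image inj_on_def)
  qed
  obtain x0 where "x0 \<in> X" using \<open>X \<noteq> {}\<close> by blast
  then have "?P \<noteq> {}"
    using fst_fibre \<open>k > 0\<close> by fastforce
  then show "(x, y) \<in> set_pmf (pmf_of_set ?P) \<Longrightarrow> R x y" for x y
    using \<open>finite ?P\<close> by auto
  show "map_pmf fst (pmf_of_set ?P) = pmf_of_set X"
    by (rule map_pmf_of_set_equal_fibres[OF \<open>finite ?P\<close> \<open>X \<noteq> {}\<close> _ fst_fibre \<open>k > 0\<close>]) auto
  show "map_pmf snd (pmf_of_set ?P) = pmf_of_set Y"
    by (rule map_pmf_of_set_equal_fibres[OF \<open>finite ?P\<close> \<open>Y \<noteq> {}\<close> _ snd_fibre \<open>l > 0\<close>]) auto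
qed

lemma rel_pmf_Pi_pmf:
  assumes "finite I" "\<And>i. i \<in> I \<Longrightarrow> rel_pmf (R i) (p i) (q i)"
  shows "rel_pmf (\<lambda>f g. \<forall>i\<in>I. R i (f i) (g i)) (Pi_pmf I d p) (Pi_pmf I d q)"
  using assms
proof (induction I rule: finite_induct)
  case empty
  then show ?case by simp
next
  case (insert i I)
  have IH: "rel_pmf (\<lambda>f g. \<forall>j\<in>I. R j (f j) (g j)) (Pi_pmf I d p) (Pi_pmf I d q)"
    using insert by simp
  show ?case
    unfolding Pi_pmf_insert'[OF insert(1,2)]
  proof (rule rel_pmf_bindI[where R = "R i"])
    show "rel_pmf (R i) (p i) (q i)" using insert by simp
    fix x y assume "R i x y"
    then show "rel_pmf (\<lambda>f g. \<forall>j\<in>insert i I. R j (f j) (g j))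
      (Pi_pmf I d p \<bind> (\<lambda>f. return_pmf (f(i := x))))
      (Pi_pmf I d q \<bind> (\<lambda>g. return_pmf (g(i := y))))"
      by (intro rel_pmf_bindI[OF IH]) (use \<open>i \<notin> I\<close> in auto)
  qed
qed

lemma rel_pmf_measure_mono:
  assumes "rel_pmf R p q" and "\<And>x y. R x y \<Longrightarrow> x \<in> A \<Longrightarrow> y \<in> A"
  shows "measure_pmf.prob p A \<le> measure_pmf.prob q A"
proof -
  have "measure_pmf.prob p A \<le> measure_pmf.prob q {y. \<exists>x\<in>A. R x y}"
    by (rule rel_pmf_measureD[OF assms(1)])
  also have "\<dots> \<le> measure_pmf.prob q A"
    by (rule measure_pmf.finite_measure_mono) (use assms(2) in auto)
  finally show ?thesis .
qed

lemma card_supersets_with_card: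
  assumes "finite C" "A \<subseteq> C" "card A \<le> m"
  shows "card {B. A \<subseteq> B \<and> B \<subseteq> C \<and> card B = m} = (card C - card A) choose (m - card A)"
proof -
  let ?Bs = "{B. A \<subseteq> B \<and> B \<subseteq> C \<and> card B = m}"
  let ?Ds = "{D. D \<subseteq> C - A \<and> card D = m - card A}"
  have "finite A" using assms finite_subset by blast
  have "bij_betw (\<lambda>D. A \<union> D) ?Ds ?Bs"
  proof (rule bij_betw_byWitness[where f' = "\<lambda>B. B - A"])
    show "\<forall>D\<in>?Ds. A \<union> D - A = D" "\<forall>B\<in>?Bs. A \<union> (B - A) = B" by blast+
    show "(\<lambda>D. A \<union> D) ` ?Ds \<subseteq> ?Bs"
    proof clarify
      fix D assume D: "D \<subseteq> C - A" "card D = m - card A"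
      then have "finite D" using assms by (auto intro: finite_subset)
      then have "card (A \<union> D) = card A + card D"
        using \<open>finite A\<close> D(1) by (intro card_Un_disjoint) auto
      then show "A \<subseteq> A \<union> D \<and> A \<union> D \<subseteq> C \<and> card (A \<union> D) = m"
        using D assms by auto
    qed
    show "(\<lambda>B. B - A) ` ?Bs \<subseteq> ?Ds"
    proof (rule image_subsetI)
      fix B assume "B \<in> ?Bs"
      then have "A \<subseteq> B" "B \<subseteq> C" "card B = m" by auto
      then show "B - A \<in> ?Ds"
        using card_Diff_subset[OF \<open>finite A\<close> \<open>A \<subseteq> B\<close>] by auto
    qed
  qed
  then have "card ?Bs = card ?Ds"
    by (simp add: bij_betw_same_card)
  also have "\<dots> = (card C - card A) choose (m - card A)"
    using assms \<open>finite A\<close> n_subsets[of "C - A" "m - card A"] by (simp add: card_Diff_subset)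
  finally show ?thesis .
qed

lemma subsets_with_card_nonempty:
  assumes "m \<le> card C"
  shows "{A. A \<subseteq> C \<and> card A = m} \<noteq> {}"
  using obtain_subset_with_card_n[OF assms] by blast

lemma finite_subsets_with_card:
  assumes "finite C"
  shows "finite {A. A \<subseteq> C \<and> card A = m}"
  by (rule finite_subset[of _ "Pow C"]) (use assms in auto)

lemma rel_pmf_of_set_subsets_with_card:
  assumes "finite C" "m \<le> m'" "m' \<le> card C"
  shows "rel_pmf (\<lambda>A B. A \<subseteq> B \<and> B \<subseteq> C)
           (pmf_of_set {A. A \<subseteq> C \<and> card A = m}) (pmf_of_set {B. B \<subseteq> C \<and> card B = m'})"
proof (rule rel_pmf_of_set_biregular)
  let ?X = "{A. A \<subseteq> C \<and> card A = m}" and ?Y = "{B. B \<subseteq> C \<and> card B = m'}"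
  show "finite ?X" "finite ?Y"
    using \<open>finite C\<close> by (rule finite_subsets_with_card)+
  show "?X \<noteq> {}" "?Y \<noteq> {}"
    using assms by (intro subsets_with_card_nonempty; simp)+
  show "card {B \<in> ?Y. A \<subseteq> B \<and> B \<subseteq> C} = (card C - m) choose (m' - m)" if "A \<in> ?X" for A
  proof -
    have "{B \<in> ?Y. A \<subseteq> B \<and> B \<subseteq> C} = {B. A \<subseteq> B \<and> B \<subseteq> C \<and> card B = m'}" by blast
    then show ?thesis using that assms card_supersets_with_card[of C A m'] by simp
  qed
  show "card {A \<in> ?X. A \<subseteq> B \<and> B \<subseteq> C} = m' choose m" if "B \<in> ?Y" for B
  proof -
    have "{A \<in> ?X. A \<subseteq> B \<and> B \<subseteq> C} = {A. A \<subseteq> B \<and> card A = m}" using that by blast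
    moreover have "finite B" using that \<open>finite C\<close> finite_subset by blast
    ultimately show ?thesis using that n_subsets[of B m] by simp
  qed
  show "0 < (card C - m) choose (m' - m)" "0 < m' choose m"
    using assms by simp_all
qed

lemma rel_pmf_choose_arcs:
  assumes "finite C" "k \<le> k'"
  shows "rel_pmf (\<lambda>A B. A \<subseteq> B \<and> B \<subseteq> C) (choose_arcs k C) (choose_arcs k' C)"
  unfolding choose_arcs_def
  by (rule rel_pmf_of_set_subsets_with_card) (use assms in auto)

definition subgraph_on :: "nat \<Rightarrow> mdigraph \<Rightarrow> mdigraph \<Rightarrow> bool" where
  "subgraph_on n G H \<longleftrightarrow> on_vertices n G \<and> on_vertices n H \<and> msubgraph G H"

definition ARD_given_types :: "nat \<Rightarrow> (nat \<Rightarrow> nat \<Rightarrow> nat) \<Rightarrow> (nat \<Rightarrow> nat) \<Rightarrow> mdigraph pmf" where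
  "ARD_given_types n \<Lambda> tp =
     (let P = tp ` {0..<n} \<times> tp ` {0..<n}
      in map_pmf (\<lambda>ch. (tp, \<Union>p\<in>P. ch p))
           (Pi_pmf P {} (\<lambda>(t, s). choose_arcs (\<Lambda> t s) (cand_arcs n tp t s))))"

lemma ARD_eq_bind_types:
  "ARD n T \<Lambda> = Pi_pmf {0..<n} 0 (\<lambda>_. T) \<bind> ARD_given_types n \<Lambda>"
  unfolding ARD_def ARD_given_types_def Let_def map_pmf_def ..

lemma finite_cand_arcs: "finite (cand_arcs n tp t s)"
  by (rule finite_subset[of _ "{0..<n} \<times> {0..<n}"]) (auto simp: cand_arcs_def)

lemma rel_pmf_ARD_given_types:
  assumes types: "\<And>u. u < n \<Longrightarrow> tp u \<in> S"
    and le: "\<And>t s. t \<in> S \<Longrightarrow> s \<in> S \<Longrightarrow> \<Lambda> t s \<le> \<Lambda>' t s"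
  shows "rel_pmf (subgraph_on n) (ARD_given_types n \<Lambda> tp) (ARD_given_types n \<Lambda>' tp)"
proof -
  let ?P = "tp ` {0..<n} \<times> tp ` {0..<n}"
  let ?R = "\<lambda>f g. \<forall>p\<in>?P. f p \<subseteq> g p \<and> g p \<subseteq> cand_arcs n tp (fst p) (snd p)"
  have "rel_pmf ?R (Pi_pmf ?P {} (\<lambda>(t, s). choose_arcs (\<Lambda> t s) (cand_arcs n tp t s)))
                   (Pi_pmf ?P {} (\<lambda>(t, s). choose_arcs (\<Lambda>' t s) (cand_arcs n tp t s)))"
  proof (rule rel_pmf_Pi_pmf)
    fix p assume "p \<in> ?P"
    then obtain t s where "p = (t, s)" "t \<in> S" "s \<in> S" using types by auto
    then show "rel_pmf (\<lambda>A B. A \<subseteq> B \<and> B \<subseteq> cand_arcs n tp (fst p) (snd p))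
      ((\<lambda>(t, s). choose_arcs (\<Lambda> t s) (cand_arcs n tp t s)) p)
      ((\<lambda>(t, s). choose_arcs (\<Lambda>' t s) (cand_arcs n tp t s)) p)"
      using rel_pmf_choose_arcs[OF finite_cand_arcs le] by simp
  qed simp
  moreover have "subgraph_on n (tp, \<Union>p\<in>?P. f p) (tp, \<Union>p\<in>?P. g p)" if "?R f g" for f g
  proof -
    have "(\<Union>p\<in>?P. g p) \<subseteq> {(u, v). u < n \<and> v < n \<and> u \<noteq> v}"
      using that by (fastforce simp: cand_arcs_def)
    moreover have "(\<Union>p\<in>?P. f p) \<subseteq> (\<Union>p\<in>?P. g p)"
      using that by fastforce
    ultimately show ?thesis
      by (auto simp: subgraph_on_def on_vertices_def msubgraph_def)
  qed
  ultimately show ?thesis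
    unfolding ARD_given_types_def Let_def pmf.rel_map by (rule pmf.rel_mono_strong) blast
qed

lemma rel_pmf_ARD:
  assumes "set_pmf T \<subseteq> S"
    and "\<And>t s. t \<in> S \<Longrightarrow> s \<in> S \<Longrightarrow> \<Lambda> t s \<le> \<Lambda>' t s"
  shows "rel_pmf (subgraph_on n) (ARD n T \<Lambda>) (ARD n T \<Lambda>')"
  unfolding ARD_eq_bind_types
proof (rule rel_pmf_bindI)
  let ?types = "Pi_pmf {0..<n} 0 (\<lambda>_. T)"
  show "rel_pmf (\<lambda>tp tp'. tp = tp' \<and> tp \<in> set_pmf ?types) ?types ?types"
    by (rule rel_pmf_reflI) simp
  fix tp tp' assume "tp = tp' \<and> tp \<in> set_pmf ?types"
  moreover have "tp u \<in> S" if "tp \<in> set_pmf ?types" "u < n" for u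
    using that assms(1) by (auto simp: set_Pi_pmf PiE_dflt_def)
  ultimately show "rel_pmf (subgraph_on n) (ARD_given_types n \<Lambda> tp) (ARD_given_types n \<Lambda>' tp')"
    using rel_pmf_ARD_given_types assms(2) by metis
qed

theorem lemma5:
  fixes n :: nat and T :: "nat pmf" and S :: "nat set"
    and \<Lambda> \<Lambda>' :: "nat \<Rightarrow> nat \<Rightarrow> nat" and Q :: "mdigraph set"
  assumes "set_pmf T \<subseteq> S"
    and "increasing_event n Q \<or> decreasing_event n Q"
    and "\<And>t s. t \<in> S \<Longrightarrow> s \<in> S \<Longrightarrow> \<Lambda> t s \<le> \<Lambda>' t s"
  shows "(increasing_event n Q \<longrightarrow>
           measure_pmf.prob (ARD n T \<Lambda>) Q \<le> measure_pmf.prob (ARD n T \<Lambda>') Q) \<and>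
         (decreasing_event n Q \<longrightarrow>
           measure_pmf.prob (ARD n T \<Lambda>) Q \<ge> measure_pmf.prob (ARD n T \<Lambda>') Q)"
proof -
  have coupling: "rel_pmf (subgraph_on n) (ARD n T \<Lambda>) (ARD n T \<Lambda>')"
    using rel_pmf_ARD assms(1,3) .
  then have reverse_coupling: "rel_pmf (subgraph_on n)\<inverse>\<inverse> (ARD n T \<Lambda>') (ARD n T \<Lambda>)"
    by (simp add: pmf.rel_flip)
  show ?thesis
  proof (intro conjI impI)
    assume "increasing_event n Q"
    then show "measure_pmf.prob (ARD n T \<Lambda>) Q \<le> measure_pmf.prob (ARD n T \<Lambda>') Q"
      by (intro rel_pmf_measure_mono[OF coupling]) (auto simp: increasing_event_def subgraph_on_def)
  next
    assume "decreasing_event n Q"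
    then show "measure_pmf.prob (ARD n T \<Lambda>') Q \<le> measure_pmf.prob (ARD n T \<Lambda>) Q"
      by (intro rel_pmf_measure_mono[OF reverse_coupling])
        (auto simp: decreasing_event_def subgraph_on_def)
  qed
qed

end
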